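(* There is a deterministic algorithm in the Congested Clique model which, given an input graph $G$ with arboricity $a\ge 2$ and a parameter $0<\varepsilon\le 2$, computes an $H$-partition of $G$ of size $O(\log n)$ and degree at most $(2+\varepsilon)a$ (in particular $O(a)$), such that each vertex learns the index of the set it belongs to; the running time is $O(\log a)$ rounds.
   Context: Congested Clique model: there are $n$ processors (vertices) with distinct IDs of $O(\log n)$ bits; computation proceeds in synchronous rounds; in each round every pair of vertices may exchange a message of $O(\log n)$ bits; local computation is free. The input is a graph $G=(V,E')$ on the same vertex set (a subgraph of the $n$-clique); each vertex initially knows its incident edges in $G$, and the value $a$ is known to all vertices. Running time is the number of rounds. The arboricity of a graph is the minimum number of forests whose union covers its edge set. An $H$-partition $(H_1,\dots,H_\ell)$ of $G=(V,E)$ with degree $A$ is a partition of $V$ into $\ell$ sets such that every vertex in $H_i$ has at most $A$ neighbors in $H_i\cup\dots\cup H_\ell$; $\ell$ is its size. *)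

theory Defs
  imports Complex_Main
begin

definition simple_graph :: "nat \<Rightarrow> nat set set \<Rightarrow> bool" where
  "simple_graph n E \<longleftrightarrow> (\<forall>e\<in>E. \<exists>u v. e = {u, v} \<and> u \<noteq> v \<and> u < n \<and> v < n)"

definition forest :: "nat set set \<Rightarrow> bool" where
  "forest F \<longleftrightarrow> \<not> (\<exists>xs. length xs \<ge> 3 \<and> distinct xs \<and>
      (\<forall>i<length xs. {xs ! i, xs ! (Suc i mod length xs)} \<in> F))"

definition arboricity :: "nat set set \<Rightarrow> nat" where
  "arboricity E = (LEAST k. \<exists>F :: nat \<Rightarrow> nat set set.
      (\<forall>i<k. F i \<subseteq> E \<and> forest (F i)) \<and> E = (\<Union>i<k. F i))"

text \<open>H-partition given by an index function h: vertex v lies in H_(h v), indices in {1..l};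
  every vertex has at most A neighbours in H_(h v) \<union> ... \<union> H_l.\<close>
definition is_H_partition :: "nat \<Rightarrow> nat set set \<Rightarrow> real \<Rightarrow> nat \<Rightarrow> (nat \<Rightarrow> nat) \<Rightarrow> bool" where
  "is_H_partition n E A l h \<longleftrightarrow>
     (\<forall>v<n. h v \<in> {1..l}) \<and>
     (\<forall>v<n. real (card {u. u < n \<and> {u, v} \<in> E \<and> h u \<ge> h v}) \<le> A)"

text \<open>Local states are lists of naturals
  (local computation is free and unbounded).
  init n a v N: initial state of vertex v, knowing n, a, its ID v and its neighbourhood N.
  msg s u: message (a natural number) sent in the current round from a vertex in state s to u.
  step s r: new state, where r w is the message received from w.
  out s: the committed output (index of the H-set) or None if not yet decided.\<close>
datatype cc_alg = CCAlg
  (cc_init: "nat \<Rightarrow> nat \<Rightarrow> nat \<Rightarrow> nat set \<Rightarrow> nat list")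
  (cc_msg: "nat list \<Rightarrow> nat \<Rightarrow> nat")
  (cc_step: "nat list \<Rightarrow> (nat \<Rightarrow> nat) \<Rightarrow> nat list")
  (cc_out: "nat list \<Rightarrow> nat option")

fun cc_run :: "cc_alg \<Rightarrow> nat \<Rightarrow> nat \<Rightarrow> nat set set \<Rightarrow> nat \<Rightarrow> nat \<Rightarrow> nat list" where
  "cc_run A n a E 0 v = cc_init A n a v {u. {u, v} \<in> E}"
| "cc_run A n a E (Suc t) v =
     cc_step A (cc_run A n a E t v)
       (\<lambda>w. if w < n \<and> w \<noteq> v then cc_msg A (cc_run A n a E t w) v else 0)"

end

theory Submission
  imports Defs
begin

text \<open>Peeling: a vertex leaves the graph as soon as at most (2 + \<epsilon>) a of its neighbours remain,
  and the vertices leaving in round i form H_i. A vertex set S spans at most a |S| edges, so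
  at most a 2 / (2 + \<epsilon>) fraction of the remaining vertices survives a round, which gives
  O(log n) sets. Simulated round by round this costs O(log n) rounds; but after
  k = \<lceil>log_{(2 + \<epsilon>)/2} (2a)\<rceil> rounds the remaining vertices span at most n/2 edges. Vertex w
  then sends its j-th remaining neighbour to vertex (\<Sum>x<w. remaining degree of x) + j, which
  broadcasts it; after these two rounds every vertex knows the remaining graph and finishes the
  peeling locally.\<close>

section \<open>Forests and arboricity\<close>

definition is_path_within :: "nat set set \<Rightarrow> nat set \<Rightarrow> nat list \<Rightarrow> bool" where
  "is_path_within F S xs \<longleftrightarrow> xs \<noteq> [] \<and> distinct xs \<and> set xs \<subseteq> S \<and>
     (\<forall>i. Suc i < length xs \<longrightarrow> {xs ! i, xs ! Suc i} \<in> F)"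

lemma path_chord_not_forest:
  assumes path: "is_path_within F S xs" and j: "2 \<le> j" "j < length xs"
    and chord: "{xs ! 0, xs ! j} \<in> F"
  shows "\<not> forest F"
proof -
  define cs where "cs = take (Suc j) xs"
  have len: "length cs = Suc j" using j cs_def by simp
  have "{cs ! i, cs ! (Suc i mod length cs)} \<in> F" if "i < length cs" for i
  proof (cases "i < j")
    case True
    then show ?thesis using path j len unfolding cs_def is_path_within_def by simp
  next
    case False
    then have "i = j" using that len by simp
    then show ?thesis using chord j len unfolding cs_def by (simp add: insert_commute)
  qed
  moreover have "distinct cs" using path unfolding cs_def is_path_within_def by simp
  moreover have "3 \<le> length cs" using len j by simp
  ultimately show ?thesis unfolding forest_def by blast
qed

lemma longest_path_first_neighbour:
  assumes forest: "forest F" and no_loops: "\<forall>e\<in>F. \<exists>u v. e = {u, v} \<and> u \<noteq> v"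
    and xs: "is_path_within F S xs"
    and longest: "\<And>ys. is_path_within F S ys \<Longrightarrow> length ys \<le> length xs"
    and y: "y \<in> S" "{xs ! 0, y} \<in> F"
  shows "y = xs ! 1"
proof (rule ccontr)
  assume "y \<noteq> xs ! 1"
  have "y \<noteq> xs ! 0"
  proof
    assume "y = xs ! 0"
    then obtain u v where "{y} = {u, v}" "u \<noteq> v" using y(2) no_loops by force
    then show False by (metis doubleton_eq_iff insert_absorb2)
  qed
  show False
  proof (cases "y \<in> set xs")
    case False
    have "is_path_within F S (y # xs)"
      unfolding is_path_within_def
    proof (intro conjI allI impI)
      fix i assume i: "Suc i < length (y # xs)"
      show "{(y # xs) ! i, (y # xs) ! Suc i} \<in> F"
      proof (cases i)
        case 0
        then show ?thesis using y(2) by (simp add: insert_commute)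
      next
        case (Suc j)
        then show ?thesis using xs i unfolding is_path_within_def by simp
      qed
    qed (use xs y False in \<open>auto simp: is_path_within_def\<close>)
    then show False using longest[of "y # xs"] by simp
  next
    case True
    then obtain j where j: "j < length xs" "xs ! j = y" by (metis in_set_conv_nth)
    moreover have "j \<noteq> 0" using j(2) \<open>y \<noteq> xs ! 0\<close> by (cases j) auto
    moreover have "j \<noteq> 1" using j(2) \<open>y \<noteq> xs ! 1\<close> by blast
    ultimately show False using path_chord_not_forest[OF xs, of j] forest y(2) by simp
  qed
qed

lemma forest_has_leaf_within:
  assumes forest: "forest F" and no_loops: "\<forall>e\<in>F. \<exists>u v. e = {u, v} \<and> u \<noteq> v"
    and fin: "finite S" and ne: "S \<noteq> {}"
  shows "\<exists>x\<in>S. card {y\<in>S. {x, y} \<in> F} \<le> 1"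
proof -
  have bounded: "\<forall>m. (\<exists>ys. is_path_within F S ys \<and> length ys = m) \<longrightarrow> m \<le> card S"
    using fin unfolding is_path_within_def by (metis card_mono distinct_card)
  obtain x0 where "x0 \<in> S" using ne by blast
  then have "\<exists>ys. is_path_within F S ys \<and> length ys = 1"
    by (intro exI[of _ "[x0]"]) (simp add: is_path_within_def)
  from Nat.ex_has_greatest_nat[OF this bounded] obtain xs where xs: "is_path_within F S xs"
    and longest: "\<And>ys. is_path_within F S ys \<Longrightarrow> length ys \<le> length xs"
    by blast
  have "{y\<in>S. {xs ! 0, y} \<in> F} \<subseteq> {xs ! 1}"
    using longest_path_first_neighbour[OF forest no_loops xs longest] by blast
  then have "card {y\<in>S. {xs ! 0, y} \<in> F} \<le> 1" using card_mono[of "{xs ! 1}"] by fastforce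
  moreover have "xs ! 0 \<in> S" using xs unfolding is_path_within_def by (simp add: subset_iff)
  ultimately show ?thesis by blast
qed

lemma edges_within_remove_vertex:
  assumes "\<forall>e\<in>F. \<exists>u v. e = {u, v}"
  shows "{e\<in>F. e \<subseteq> S} \<subseteq> {e\<in>F. e \<subseteq> S - {x}} \<union> (\<lambda>y. {x, y}) ` {y\<in>S. {x, y} \<in> F}"
  using assms by (fastforce simp: insert_commute)

lemma forest_card_edges_within_le:
  assumes forest: "forest F" and no_loops: "\<forall>e\<in>F. \<exists>u v. e = {u, v} \<and> u \<noteq> v"
    and "finite S"
  shows "card {e\<in>F. e \<subseteq> S} \<le> card S"
  using \<open>finite S\<close>
proof (induction "card S" arbitrary: S rule: less_induct)
  case less
  show ?case
  proof (cases "S = {}")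
    case True
    then have "{e\<in>F. e \<subseteq> S} = {}" using no_loops by blast
    then show ?thesis by (metis card.empty zero_le)
  next
    case False
    obtain x where x: "x \<in> S" and leaf: "card {y\<in>S. {x, y} \<in> F} \<le> 1"
      using forest_has_leaf_within[OF forest no_loops less.prems False] by blast
    let ?A = "{e\<in>F. e \<subseteq> S - {x}}" and ?B = "(\<lambda>y. {x, y}) ` {y\<in>S. {x, y} \<in> F}"
    have "finite ?A" by (rule finite_subset[of _ "Pow S"]) (use less.prems in auto)
    moreover have "{e\<in>F. e \<subseteq> S} \<subseteq> ?A \<union> ?B"
      using no_loops by (intro edges_within_remove_vertex) blast
    ultimately have "card {e\<in>F. e \<subseteq> S} \<le> card (?A \<union> ?B)"
      using less.prems by (intro card_mono) auto
    also have "\<dots> \<le> card ?A + card ?B" by (rule card_Un_le)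
    also have "\<dots> \<le> card (S - {x}) + 1"
    proof (rule add_mono)
      show "card ?A \<le> card (S - {x})"
        using less.hyps[of "S - {x}"] card_Diff1_less[OF less.prems x] less.prems by simp
      show "card ?B \<le> 1"
        using card_image_le[of "{y\<in>S. {x, y} \<in> F}" "\<lambda>y. {x, y}"] less.prems leaf by simp
    qed
    also have "\<dots> = card S" using card_Suc_Diff1[OF less.prems x] by simp
    finally show ?thesis .
  qed
qed

lemma simple_graph_finite: "simple_graph n E \<Longrightarrow> finite E"
  unfolding simple_graph_def by (rule finite_subset[of _ "Pow {0..<n}"]) auto

lemma forest_singleton:
  assumes "u \<noteq> v"
  shows "forest {{u, v}}"
  unfolding forest_def
proof
  assume "\<exists>xs. 3 \<le> length xs \<and> distinct xs \<and>
    (\<forall>i<length xs. {xs ! i, xs ! (Suc i mod length xs)} \<in> {{u, v}})"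
  then obtain xs where l: "3 \<le> length xs" and d: "distinct xs"
    and c: "\<And>i. i < length xs \<Longrightarrow> {xs ! i, xs ! (Suc i mod length xs)} = {u, v}" by auto
  have len: "0 < length xs" "1 < length xs" "2 < length xs" using l by auto
  then have "{xs ! 0, xs ! 1} = {u, v}" "{xs ! 1, xs ! 2} = {u, v}"
    using c[of 0] c[of 1] l by (simp_all add: numeral_2_eq_2)
  then have "xs ! 2 = xs ! 0 \<or> xs ! 2 = xs ! 1" by (metis doubleton_eq_iff)
  then show False using d len by (simp add: nth_eq_iff_index_eq)
qed

lemma arboricity_forests:
  assumes graph: "simple_graph n E"
  obtains F where "\<And>i. i < arboricity E \<Longrightarrow> F i \<subseteq> E \<and> forest (F i)"
    and "E = (\<Union>i<arboricity E. F i)"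
proof -
  obtain xs where xs: "set xs = E" using finite_list[OF simple_graph_finite[OF graph]] by blast
  let ?P = "\<lambda>k. \<exists>F :: nat \<Rightarrow> nat set set. (\<forall>i<k. F i \<subseteq> E \<and> forest (F i)) \<and> E = (\<Union>i<k. F i)"
  have "{xs ! i} \<subseteq> E \<and> forest {xs ! i}" if "i < length xs" for i
  proof -
    have "xs ! i \<in> E" using that xs by auto
    then obtain u v where "xs ! i = {u, v}" "u \<noteq> v" using graph unfolding simple_graph_def by blast
    then show ?thesis using \<open>xs ! i \<in> E\<close> forest_singleton by simp
  qed
  moreover have "E = (\<Union>i<length xs. {xs ! i})" using xs by (auto simp: in_set_conv_nth)
  ultimately have "?P (length xs)" by (intro exI[of _ "\<lambda>i. {xs ! i}"]) blast
  then have "?P (arboricity E)" unfolding arboricity_def by (rule LeastI)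
  then show ?thesis using that by blast
qed

lemma card_edges_within_le_arboricity:
  assumes graph: "simple_graph n E" and "finite S"
  shows "card {e\<in>E. e \<subseteq> S} \<le> arboricity E * card S"
proof -
  define k where "k = arboricity E"
  obtain F where F: "\<And>i. i < k \<Longrightarrow> F i \<subseteq> E \<and> forest (F i)" and E: "E = (\<Union>i<k. F i)"
    using arboricity_forests[OF graph] unfolding k_def by blast
  have "card {e\<in>E. e \<subseteq> S} = card (\<Union>i<k. {e\<in>F i. e \<subseteq> S})"
    using E by (intro arg_cong[where f = card]) auto
  also have "\<dots> \<le> (\<Sum>i<k. card {e\<in>F i. e \<subseteq> S})" by (rule card_UN_le) simp
  also have "\<dots> \<le> (\<Sum>i<k. card S)"
  proof (rule sum_mono)
    fix i assume "i \<in> {..<k}"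
    then have "F i \<subseteq> E" "forest (F i)" using F by auto
    moreover have "\<forall>e\<in>F i. \<exists>u v. e = {u, v} \<and> u \<noteq> v"
      using graph \<open>F i \<subseteq> E\<close> unfolding simple_graph_def by blast
    ultimately show "card {e\<in>F i. e \<subseteq> S} \<le> card S"
      using forest_card_edges_within_le \<open>finite S\<close> by blast
  qed
  finally show ?thesis by (simp add: k_def)
qed

lemma sum_degree_within_le_arboricity:
  assumes graph: "simple_graph n E" and fin: "finite S"
  shows "(\<Sum>v\<in>S. card {u\<in>S. {u, v} \<in> E}) \<le> 2 * arboricity E * card S"
proof -
  let ?ES = "{e\<in>E. e \<subseteq> S}"
  have "(\<Sum>v\<in>S. card {u\<in>S. {u, v} \<in> E}) = card (SIGMA v:S. {u\<in>S. {u, v} \<in> E})"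
    using fin by simp
  also have "\<dots> \<le> card (\<Union>e\<in>?ES. {(p, q). {q, p} = e})"
    by (rule card_mono) (rule finite_subset[of _ "S \<times> S"], use fin in auto)
  also have "\<dots> \<le> (\<Sum>e\<in>?ES. card {(p, q). {q, p} = e})"
    by (rule card_UN_le) (use simple_graph_finite[OF graph] in auto)
  also have "\<dots> \<le> (\<Sum>e\<in>?ES. 2)"
  proof (rule sum_mono)
    fix e assume "e \<in> ?ES"
    then obtain x y where e: "e = {x, y}" using graph unfolding simple_graph_def by blast
    then have "{(p, q). {q, p} = e} \<subseteq> {(y, x), (x, y)}" by (auto simp: doubleton_eq_iff)
    then have "card {(p, q). {q, p} = e} \<le> card {(y, x), (x, y)}" by (intro card_mono) auto
    also have "\<dots> \<le> 2" by (simp add: card_insert_le_m1)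
    finally show "card {(p, q). {q, p} = e} \<le> 2" .
  qed
  also have "\<dots> \<le> 2 * arboricity E * card S"
    using card_edges_within_le_arboricity[OF graph fin] by simp
  finally show ?thesis .
qed

lemma arboricity_pos_imp_two_le:
  assumes "simple_graph n E" and "0 < arboricity E"
  shows "2 \<le> n"
proof (rule ccontr)
  assume "\<not> 2 \<le> n"
  then have "E = {}" using assms(1) unfolding simple_graph_def by fastforce
  then have "arboricity E = 0" unfolding arboricity_def
    by (intro Least_eq_0) (rule exI[of _ "\<lambda>_. {}"], simp)
  then show False using assms(2) by simp
qed

section \<open>Peeling\<close>

definition neighbours :: "nat \<Rightarrow> nat set set \<Rightarrow> nat \<Rightarrow> nat set" where
  "neighbours n E v = {u. u < n \<and> {u, v} \<in> E}"

text \<open>peel n E d i is the set of vertices outside H_1, ..., H_i, and peel_level n E d v is the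
  index of the set H containing v.\<close>
fun peel :: "nat \<Rightarrow> nat set set \<Rightarrow> real \<Rightarrow> nat \<Rightarrow> nat set" where
  "peel n E d 0 = {0..<n}"
| "peel n E d (Suc i) = {v \<in> peel n E d i. d < real (card (neighbours n E v \<inter> peel n E d i))}"

definition peel_level :: "nat \<Rightarrow> nat set set \<Rightarrow> real \<Rightarrow> nat \<Rightarrow> nat" where
  "peel_level n E d v = Suc (LEAST i. v \<notin> peel n E d (Suc i))"

lemma peel_Suc_subset: "peel n E d (Suc i) \<subseteq> peel n E d i"
  by auto

lemma peel_antimono: "i \<le> j \<Longrightarrow> peel n E d j \<subseteq> peel n E d i"
  by (rule lift_Suc_antimono_le[of "peel n E d"]) (use peel_Suc_subset in auto)

lemma peel_subset: "peel n E d i \<subseteq> {0..<n}"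
  by (induction i) auto

lemma finite_peel [simp]: "finite (peel n E d i)"
  by (rule finite_subset[OF peel_subset]) simp

lemma sum_degree_peel_le:
  assumes "simple_graph n E"
  shows "(\<Sum>v\<in>peel n E d i. card (neighbours n E v \<inter> peel n E d i))
    \<le> 2 * arboricity E * card (peel n E d i)"
proof -
  have "neighbours n E v \<inter> peel n E d i = {u\<in>peel n E d i. {u, v} \<in> E}" for v
    using peel_subset[of n E d i] unfolding neighbours_def by auto
  then show ?thesis using sum_degree_within_le_arboricity[OF assms finite_peel] by simp
qed

lemma card_peel_Suc_le:
  assumes "simple_graph n E"
  shows "real (card (peel n E d (Suc i))) * d \<le> 2 * arboricity E * card (peel n E d i)"
proof -
  let ?S = "peel n E d i"
  have "real (card (peel n E d (Suc i))) * d = (\<Sum>v\<in>peel n E d (Suc i). d)" by simp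
  also have "\<dots> \<le> (\<Sum>v\<in>peel n E d (Suc i). real (card (neighbours n E v \<inter> ?S)))"
    by (rule sum_mono) auto
  also have "\<dots> \<le> (\<Sum>v\<in>?S. real (card (neighbours n E v \<inter> ?S)))"
    by (rule sum_mono2) auto
  also have "\<dots> = real (\<Sum>v\<in>?S. card (neighbours n E v \<inter> ?S))" by simp
  also have "\<dots> \<le> real (2 * arboricity E * card ?S)"
    using sum_degree_peel_le[OF assms, of d i] by (simp only: of_nat_le_iff)
  finally show ?thesis by simp
qed

lemma card_peel_le:
  assumes "simple_graph n E" and "0 < d"
  shows "real (card (peel n E d i)) \<le> (2 * arboricity E / d) ^ i * n"
proof (induction i)
  case (Suc i)
  have "real (card (peel n E d (Suc i))) \<le> 2 * arboricity E / d * card (peel n E d i)"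
    using card_peel_Suc_le[OF assms(1), of d i] assms(2) by (simp add: field_simps)
  also have "\<dots> \<le> 2 * arboricity E / d * ((2 * arboricity E / d) ^ i * n)"
    using Suc.IH assms(2) by (intro mult_left_mono) auto
  finally show ?case by simp
qed simp

lemma mem_peel_iff_less_peel_level:
  assumes "peel n E d L = {}" and "v < n"
  shows "v \<in> peel n E d j \<longleftrightarrow> j < peel_level n E d v"
proof -
  let ?i = "LEAST i. v \<notin> peel n E d (Suc i)"
  have "v \<notin> peel n E d (Suc L)" using assms(1) peel_Suc_subset[of n E d L] by blast
  then have out: "v \<notin> peel n E d (Suc ?i)" by (rule LeastI)
  have "v \<in> peel n E d j" if "j \<le> ?i"
  proof (cases j)
    case (Suc j')
    then show ?thesis using that not_less_Least[of j' "\<lambda>i. v \<notin> peel n E d (Suc i)"] by simp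
  qed (use assms(2) in simp)
  moreover have "v \<notin> peel n E d j" if "Suc ?i \<le> j"
    using out peel_antimono[OF that] by blast
  ultimately show ?thesis unfolding peel_level_def
    by (cases "j \<le> ?i") (auto simp del: peel.simps)
qed

lemma peel_level_is_H_partition:
  assumes "peel n E d L = {}"
  shows "is_H_partition n E d L (peel_level n E d)"
  unfolding is_H_partition_def
proof (intro conjI allI impI)
  fix v assume "v < n"
  then have "\<not> L < peel_level n E d v"
    using mem_peel_iff_less_peel_level[OF assms] assms by blast
  then show "peel_level n E d v \<in> {1..L}" unfolding peel_level_def by simp
next
  fix v assume "v < n"
  note mem = mem_peel_iff_less_peel_level[OF assms]
  obtain i where i: "peel_level n E d v = Suc i" unfolding peel_level_def by blast
  then have "v \<in> peel n E d i" "v \<notin> peel n E d (Suc i)"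
    using mem[OF \<open>v < n\<close>] by (auto simp del: peel.simps)
  then have "\<not> d < real (card (neighbours n E v \<inter> peel n E d i))" by simp
  moreover have "{u. u < n \<and> {u, v} \<in> E \<and> peel_level n E d u \<ge> peel_level n E d v}
      = neighbours n E v \<inter> peel n E d i"
    using mem i unfolding neighbours_def by (auto simp del: peel.simps)
  ultimately show "real (card {u. u < n \<and> {u, v} \<in> E \<and> peel_level n E d u \<ge> peel_level n E d v}) \<le> d"
    by simp
qed

lemma le_power_nat_ceiling_log:
  assumes "1 < b" "0 < x"
  shows "x \<le> b ^ nat \<lceil>log b x\<rceil>"
proof -
  have "x = b powr log b x" using assms by simp
  also have "\<dots> \<le> b powr real (nat \<lceil>log b x\<rceil>)"
    using assms(1) of_nat_ceiling by (intro powr_mono) auto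
  also have "\<dots> = b ^ nat \<lceil>log b x\<rceil>" using assms(1) by (simp add: powr_realpow)
  finally show ?thesis .
qed

lemma card_peel_mult_power_le:
  fixes eps :: real
  assumes "simple_graph n E" "0 < arboricity E" "0 < eps"
  shows "real (card (peel n E ((2 + eps) * arboricity E) i)) * ((2 + eps) / 2) ^ i \<le> n"
proof -
  let ?a = "real (arboricity E)" and ?b = "(2 + eps) / 2"
  have "2 * ?a / ((2 + eps) * ?a) = 1 / ?b" using assms(2) by simp
  then have "real (card (peel n E ((2 + eps) * arboricity E) i)) \<le> n / ?b ^ i"
    using card_peel_le[OF assms(1), of "(2 + eps) * arboricity E" i] assms(2,3)
    by (simp add: power_divide mult.commute)
  then show ?thesis using assms(3) by (simp add: pos_le_divide_eq)
qed

lemma peel_eventually_empty: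
  fixes eps :: real
  assumes "simple_graph n E" "0 < arboricity E" "0 < eps"
  shows "peel n E ((2 + eps) * arboricity E) (nat \<lceil>log ((2 + eps) / 2) n\<rceil> + 1) = {}"
    (is "peel n E ?d ?l = {}")
proof (cases "n = 0")
  case False
  let ?b = "(2 + eps) / 2"
  have "real n * ?b \<le> ?b ^ nat \<lceil>log ?b n\<rceil> * ?b"
    using le_power_nat_ceiling_log[of ?b n] False assms(3) by (intro mult_right_mono) auto
  moreover have "real n < real n * ?b" using False assms(3) by simp
  ultimately have "real n < ?b ^ ?l" by (simp only: power_add power_one_right)
  moreover have "real (card (peel n E ?d ?l)) * ?b ^ ?l \<le> n"
    by (rule card_peel_mult_power_le[OF assms])
  ultimately have "real (card (peel n E ?d ?l)) * ?b ^ ?l < 1 * ?b ^ ?l" by linarith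
  then have "real (card (peel n E ?d ?l)) < 1" by (rule mult_right_less_imp_less) (use assms(3) in simp)
  then show ?thesis by simp
qed (use peel_subset[of n E] in auto)

definition peel_rounds :: "real \<Rightarrow> nat \<Rightarrow> nat" where
  "peel_rounds eps a = nat \<lceil>log ((2 + eps) / 2) (2 * real a)\<rceil>"

lemma card_peel_rounds_le:
  fixes eps :: real
  assumes "simple_graph n E" "0 < arboricity E" "0 < eps"
  shows "2 * arboricity E * card (peel n E ((2 + eps) * arboricity E) (peel_rounds eps (arboricity E))) \<le> n"
proof -
  let ?b = "(2 + eps) / 2" and ?k = "peel_rounds eps (arboricity E)"
  let ?c = "real (card (peel n E ((2 + eps) * arboricity E) ?k))"
  have "2 * real (arboricity E) \<le> ?b ^ ?k"
    unfolding peel_rounds_def using assms(2,3) by (intro le_power_nat_ceiling_log) auto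
  then have "2 * real (arboricity E) * ?c \<le> ?c * ?b ^ ?k"
    by (metis mult.commute mult_left_mono of_nat_0_le_iff)
  also have "\<dots> \<le> n" by (rule card_peel_mult_power_le[OF assms])
  finally have "real (2 * arboricity E * card (peel n E ((2 + eps) * arboricity E) ?k)) \<le> real n"
    by simp
  then show ?thesis by (simp only: of_nat_le_iff)
qed

section \<open>Routing the remaining edges\<close>

definition peel_degree :: "nat \<Rightarrow> nat set set \<Rightarrow> real \<Rightarrow> nat \<Rightarrow> nat \<Rightarrow> nat" where
  "peel_degree n E d k w =
     (if w \<in> peel n E d k then card (neighbours n E w \<inter> peel n E d k) else 0)"

definition slot_offset :: "nat \<Rightarrow> nat set set \<Rightarrow> real \<Rightarrow> nat \<Rightarrow> nat \<Rightarrow> nat" where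
  "slot_offset n E d k w = (\<Sum>x<w. peel_degree n E d k x)"

text \<open>Slots are vertices: w owns the slots from slot_offset w on, one per remaining neighbour,
  and sends its i-th remaining neighbour to its i-th slot, shifted by one so that 0 means
  "no message".\<close>
definition slot_msg :: "nat \<Rightarrow> nat set set \<Rightarrow> real \<Rightarrow> nat \<Rightarrow> nat \<Rightarrow> nat \<Rightarrow> nat" where
  "slot_msg n E d k w p =
     (if w \<in> peel n E d k \<and> slot_offset n E d k w \<le> p \<and> p < slot_offset n E d k w + peel_degree n E d k w
      then sorted_list_of_set (neighbours n E w \<inter> peel n E d k) ! (p - slot_offset n E d k w) + 1
      else 0)"

text \<open>A slot passes on the edge (w, y) it received as the single number w * n + y + 1.\<close>
definition relay_code :: "nat \<Rightarrow> (nat \<Rightarrow> nat) \<Rightarrow> nat" where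
  "relay_code n f =
     (if \<exists>w<n. f w \<noteq> 0 then let w = LEAST w. w < n \<and> f w \<noteq> 0 in w * n + f w else 0)"

definition decode_edge :: "nat \<Rightarrow> nat \<Rightarrow> nat \<times> nat" where
  "decode_edge n c = ((c - 1) div n, (c - 1) mod n)"

definition intended_msg :: "nat \<Rightarrow> nat set set \<Rightarrow> real \<Rightarrow> nat \<Rightarrow> nat \<Rightarrow> nat \<Rightarrow> nat \<Rightarrow> nat" where
  "intended_msg n E d k j w p =
     (if j \<le> k then (if w \<in> peel n E d j then 1 else 0)
      else if j = Suc k then peel_degree n E d k w
      else if j = Suc (Suc k) then slot_msg n E d k w p
      else if j = Suc (Suc (Suc k)) then relay_code n (\<lambda>x. slot_msg n E d k x w)
      else 0)"

lemma peel_degree_le: "peel_degree n E d k w \<le> n"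
proof -
  have "card (neighbours n E w \<inter> peel n E d k) \<le> card {0..<n}"
    by (rule card_mono) (auto simp: neighbours_def)
  then show ?thesis unfolding peel_degree_def by simp
qed

lemma sum_peel_degree_le:
  assumes "simple_graph n E"
  shows "(\<Sum>w<n. peel_degree n E d k w) \<le> 2 * arboricity E * card (peel n E d k)"
proof -
  have "(\<Sum>w<n. peel_degree n E d k w) = (\<Sum>w\<in>peel n E d k. card (neighbours n E w \<inter> peel n E d k))"
    unfolding peel_degree_def using peel_subset[of n E d k]
    by (simp add: sum.If_cases Int_absorb1 lessThan_atLeast0)
  then show ?thesis using sum_degree_peel_le[OF assms] by simp
qed

lemma relay_code_cong:
  assumes eq: "\<And>w. w < n \<Longrightarrow> f w = g w"
  shows "relay_code n f = relay_code n g"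
proof -
  have same: "(w < n \<and> f w \<noteq> 0) = (w < n \<and> g w \<noteq> 0)" for w using eq by auto
  show ?thesis
  proof (cases "\<exists>w<n. f w \<noteq> 0")
    case True
    then have "(LEAST w. w < n \<and> f w \<noteq> 0) < n" by (rule LeastI2_ex) simp
    moreover have "\<exists>w<n. g w \<noteq> 0" using True eq by auto
    ultimately show ?thesis using True eq same unfolding relay_code_def Let_def by simp
  next
    case False
    moreover have "\<not> (\<exists>w<n. g w \<noteq> 0)" using False eq by auto
    ultimately show ?thesis unfolding relay_code_def by (simp only: if_False)
  qed
qed

lemma relay_code_nonzeroD:
  assumes "relay_code n f \<noteq> 0"
  obtains w where "w < n" "f w \<noteq> 0" "relay_code n f = w * n + f w"
proof -
  let ?w = "LEAST w. w < n \<and> f w \<noteq> 0"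
  have ex: "\<exists>w<n. f w \<noteq> 0" using assms unfolding relay_code_def by argo
  then have "?w < n \<and> f ?w \<noteq> 0" by (metis (mono_tags, lifting) LeastI)
  then show ?thesis using ex by (intro that[of ?w]) (simp_all add: relay_code_def Let_def)
qed

lemma relay_code_unique:
  assumes "w < n" "f w \<noteq> 0" and unique: "\<And>x. x < n \<Longrightarrow> f x \<noteq> 0 \<Longrightarrow> x = w"
  shows "relay_code n f = w * n + f w"
proof -
  have "(LEAST x. x < n \<and> f x \<noteq> 0) = w"
  proof (rule Least_equality)
    fix y assume "y < n \<and> f y \<noteq> 0"
    then have "y = w" using unique by blast
    then show "w \<le> y" by simp
  qed (use assms(1,2) in simp)
  moreover have "\<exists>x<n. f x \<noteq> 0" using assms(1,2) by blast
  ultimately show ?thesis unfolding relay_code_def Let_def by simp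
qed

lemma decode_edge_code:
  "y < n \<Longrightarrow> decode_edge n (w * n + Suc y) = (w, y)"
  unfolding decode_edge_def by simp

lemma slot_msg_nonzeroD:
  assumes "slot_msg n E d k w p \<noteq> 0"
  shows "w \<in> peel n E d k" "slot_offset n E d k w \<le> p"
    "p < slot_offset n E d k w + peel_degree n E d k w"
    "slot_msg n E d k w p - 1 \<in> neighbours n E w \<inter> peel n E d k"
proof -
  let ?S = "neighbours n E w \<inter> peel n E d k" and ?o = "slot_offset n E d k w"
  have cond: "w \<in> peel n E d k \<and> ?o \<le> p \<and> p < ?o + peel_degree n E d k w"
  proof (rule ccontr)
    assume "\<not> ?thesis"
    then have "slot_msg n E d k w p = 0" unfolding slot_msg_def by (rule if_not_P)
    then show False using assms by contradiction
  qed
  then show "w \<in> peel n E d k" "?o \<le> p" "p < ?o + peel_degree n E d k w" by auto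
  have "length (sorted_list_of_set ?S) = peel_degree n E d k w"
    using cond unfolding peel_degree_def by simp
  then have "sorted_list_of_set ?S ! (p - ?o) \<in> set (sorted_list_of_set ?S)"
    using cond by (intro nth_mem) linarith
  then show "slot_msg n E d k w p - 1 \<in> ?S" using cond unfolding slot_msg_def by simp
qed

lemma slot_msg_le: "slot_msg n E d k w p \<le> n"
proof (cases "slot_msg n E d k w p = 0")
  case False
  then have "slot_msg n E d k w p - 1 < n"
    using slot_msg_nonzeroD(4) unfolding neighbours_def by blast
  then show ?thesis by simp
qed simp

lemma slot_msg_unique_sender:
  assumes "slot_msg n E d k w p \<noteq> 0" "slot_msg n E d k w' p \<noteq> 0"
  shows "w = w'"
proof -
  have "\<not> w < w'" if "slot_msg n E d k w p \<noteq> 0" "slot_msg n E d k w' p \<noteq> 0" for w w'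
  proof
    assume "w < w'"
    have "slot_offset n E d k w + peel_degree n E d k w = slot_offset n E d k (Suc w)"
      unfolding slot_offset_def by simp
    also have "\<dots> \<le> slot_offset n E d k w'"
      unfolding slot_offset_def using \<open>w < w'\<close> by (intro sum_mono2) auto
    finally show False using slot_msg_nonzeroD[OF that(1)] slot_msg_nonzeroD[OF that(2)] by linarith
  qed
  then show ?thesis using assms by (meson linorder_neqE_nat)
qed

lemma slot_msg_covers_edge:
  assumes few: "(\<Sum>w<n. peel_degree n E d k w) \<le> n"
    and x: "x \<in> peel n E d k" and y: "y \<in> neighbours n E x \<inter> peel n E d k"
  obtains p where "p < n" "slot_msg n E d k x p = Suc y"
proof -
  let ?L = "sorted_list_of_set (neighbours n E x \<inter> peel n E d k)"
  obtain i where i: "i < length ?L" "?L ! i = y"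
    using y by (metis finite_Int finite_peel in_set_conv_nth set_sorted_list_of_set)
  have deg: "peel_degree n E d k x = length ?L" using x unfolding peel_degree_def by simp
  have "x < n" using x peel_subset by fastforce
  let ?p = "slot_offset n E d k x + i"
  have "?p < slot_offset n E d k (Suc x)" using i deg unfolding slot_offset_def by simp
  also have "\<dots> \<le> (\<Sum>w<n. peel_degree n E d k w)"
    unfolding slot_offset_def using \<open>x < n\<close> by (intro sum_mono2) auto
  finally have "?p < n" using few by linarith
  moreover have "slot_msg n E d k x ?p = Suc y" using x i deg unfolding slot_msg_def by simp
  ultimately show ?thesis using that by blast
qed

lemma relay_code_slot_msg_le: "relay_code n (\<lambda>x. slot_msg n E d k x p) \<le> n * n"
proof (cases "relay_code n (\<lambda>x. slot_msg n E d k x p) = 0")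
  case False
  then obtain w where "w < n" "relay_code n (\<lambda>x. slot_msg n E d k x p) = w * n + slot_msg n E d k w p"
    by (rule relay_code_nonzeroD)
  moreover have "w * n + slot_msg n E d k w p \<le> w * n + n" using slot_msg_le by simp
  moreover have "w * n + n \<le> n * n" using \<open>w < n\<close> by (metis add.commute mult_Suc Suc_leI mult_le_mono1)
  ultimately show ?thesis by linarith
qed simp

lemma intended_msg_less:
  assumes "2 \<le> n"
  shows "intended_msg n E d k j w p < n ^ 3"
proof -
  have "n * n < n ^ 3" using assms by (simp add: power3_eq_cube)
  moreover have "1 \<le> n * n" "n \<le> n * n" using assms by simp_all
  ultimately have "peel_degree n E d k w < n ^ 3" "slot_msg n E d k w p < n ^ 3"
    "relay_code n (\<lambda>x. slot_msg n E d k x w) < n ^ 3" "1 < n ^ 3"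
    using peel_degree_le[of n E d k w] slot_msg_le[of n E d k w p]
      relay_code_slot_msg_le[of n E d k w] by linarith+
  then show ?thesis unfolding intended_msg_def using assms by (simp del: peel.simps)
qed


lemma decode_relay_codes_eq_remaining_edges:
  assumes few: "(\<Sum>w<n. peel_degree n E d k w) \<le> n"
  shows "decode_edge n ` {c. \<exists>p<n. c = relay_code n (\<lambda>x. slot_msg n E d k x p) \<and> c \<noteq> 0}
    = {(x, y). x \<in> peel n E d k \<and> y \<in> neighbours n E x \<inter> peel n E d k}"
proof (intro equalityI subsetI)
  fix e assume "e \<in> decode_edge n ` {c. \<exists>p<n. c = relay_code n (\<lambda>x. slot_msg n E d k x p) \<and> c \<noteq> 0}"
  then obtain p where e: "e = decode_edge n (relay_code n (\<lambda>x. slot_msg n E d k x p))"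
    and nz: "relay_code n (\<lambda>x. slot_msg n E d k x p) \<noteq> 0" by blast
  obtain w where w: "slot_msg n E d k w p \<noteq> 0"
    and code: "relay_code n (\<lambda>x. slot_msg n E d k x p) = w * n + slot_msg n E d k w p"
    using relay_code_nonzeroD[OF nz] by blast
  define y where "y = slot_msg n E d k w p - 1"
  have y: "y \<in> neighbours n E w \<inter> peel n E d k" and "slot_msg n E d k w p = Suc y"
    using slot_msg_nonzeroD(4)[OF w] w unfolding y_def by auto
  moreover have "y < n" using y unfolding neighbours_def by simp
  ultimately have "e = (w, y)" using e code decode_edge_code by simp
  then show "e \<in> {(x, y). x \<in> peel n E d k \<and> y \<in> neighbours n E x \<inter> peel n E d k}"
    using slot_msg_nonzeroD(1)[OF w] y by simp
next
  fix e assume "e \<in> {(x, y). x \<in> peel n E d k \<and> y \<in> neighbours n E x \<inter> peel n E d k}"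
  then obtain x y where e: "e = (x, y)" and x: "x \<in> peel n E d k"
    and y: "y \<in> neighbours n E x \<inter> peel n E d k" by blast
  obtain p where p: "p < n" "slot_msg n E d k x p = Suc y"
    using slot_msg_covers_edge[OF few x y] by blast
  have "x < n" using x peel_subset[of n E d k] by auto
  have unique: "z = x" if "z < n" "slot_msg n E d k z p \<noteq> 0" for z
    using slot_msg_unique_sender[OF that(2)] p(2) by simp
  have code: "relay_code n (\<lambda>z. slot_msg n E d k z p) = x * n + slot_msg n E d k x p"
    by (rule relay_code_unique[OF \<open>x < n\<close> _ unique]) (simp_all add: p(2))
  moreover have "y < n" using y unfolding neighbours_def by simp
  ultimately have "e = decode_edge n (relay_code n (\<lambda>z. slot_msg n E d k z p))"
    using e p(2) decode_edge_code by simp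
  moreover have "relay_code n (\<lambda>z. slot_msg n E d k z p)
      \<in> {c. \<exists>p<n. c = relay_code n (\<lambda>x. slot_msg n E d k x p) \<and> c \<noteq> 0}"
    using p code by auto
  ultimately show "e \<in> decode_edge n ` {c. \<exists>p<n. c = relay_code n (\<lambda>x. slot_msg n E d k x p) \<and> c \<noteq> 0}"
    by (rule image_eqI)
qed

section \<open>Local computation\<close>

text \<open>What vertex v computes from its neighbourhood N and the messages Rcv j w received from w
  in round j; each local_X mirrors the global X, its own contribution included.\<close>
fun local_alive :: "real \<Rightarrow> nat set \<Rightarrow> (nat \<Rightarrow> nat \<Rightarrow> nat) \<Rightarrow> nat \<Rightarrow> bool" where
  "local_alive d N Rcv 0 = True"
| "local_alive d N Rcv (Suc i) = (local_alive d N Rcv i \<and> d < real (card {u \<in> N. Rcv i u = 1}))"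

definition local_remaining ::
  "real \<Rightarrow> nat \<Rightarrow> nat \<Rightarrow> nat \<Rightarrow> nat set \<Rightarrow> (nat \<Rightarrow> nat \<Rightarrow> nat) \<Rightarrow> nat set" where
  "local_remaining d k n v N Rcv =
     {u. u < n \<and> (if u = v then local_alive d N Rcv k else Rcv k u = 1)}"

definition local_degree ::
  "real \<Rightarrow> nat \<Rightarrow> nat \<Rightarrow> nat \<Rightarrow> nat set \<Rightarrow> (nat \<Rightarrow> nat \<Rightarrow> nat) \<Rightarrow> nat \<Rightarrow> nat" where
  "local_degree d k n v N Rcv w =
     (if w \<noteq> v then Rcv (Suc k) w
      else if local_alive d N Rcv k then card (N \<inter> local_remaining d k n v N Rcv) else 0)"

definition local_offset :: "real \<Rightarrow> nat \<Rightarrow> nat \<Rightarrow> nat \<Rightarrow> nat set \<Rightarrow> (nat \<Rightarrow> nat \<Rightarrow> nat) \<Rightarrow> nat" where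
  "local_offset d k n v N Rcv = (\<Sum>w<v. local_degree d k n v N Rcv w)"

definition local_slot_msg ::
  "real \<Rightarrow> nat \<Rightarrow> nat \<Rightarrow> nat \<Rightarrow> nat set \<Rightarrow> (nat \<Rightarrow> nat \<Rightarrow> nat) \<Rightarrow> nat \<Rightarrow> nat" where
  "local_slot_msg d k n v N Rcv p =
     (if local_alive d N Rcv k \<and> local_offset d k n v N Rcv \<le> p
         \<and> p < local_offset d k n v N Rcv + local_degree d k n v N Rcv v
      then sorted_list_of_set (N \<inter> local_remaining d k n v N Rcv) ! (p - local_offset d k n v N Rcv) + 1
      else 0)"

definition local_relay :: "real \<Rightarrow> nat \<Rightarrow> nat \<Rightarrow> nat \<Rightarrow> nat set \<Rightarrow> (nat \<Rightarrow> nat \<Rightarrow> nat) \<Rightarrow> nat" where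
  "local_relay d k n v N Rcv =
     relay_code n (\<lambda>w. if w = v then local_slot_msg d k n v N Rcv v else Rcv (Suc (Suc k)) w)"

definition relayed_code ::
  "real \<Rightarrow> nat \<Rightarrow> nat \<Rightarrow> nat \<Rightarrow> nat set \<Rightarrow> (nat \<Rightarrow> nat \<Rightarrow> nat) \<Rightarrow> nat \<Rightarrow> nat" where
  "relayed_code d k n v N Rcv p =
     (if p = v then local_relay d k n v N Rcv else Rcv (Suc (Suc (Suc k))) p)"

definition learned_edges ::
  "real \<Rightarrow> nat \<Rightarrow> nat \<Rightarrow> nat \<Rightarrow> nat set \<Rightarrow> (nat \<Rightarrow> nat \<Rightarrow> nat) \<Rightarrow> (nat \<times> nat) set" where
  "learned_edges d k n v N Rcv =
     decode_edge n ` {c. \<exists>p<n. c = relayed_code d k n v N Rcv p \<and> c \<noteq> 0}"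

fun local_peel :: "real \<Rightarrow> nat \<Rightarrow> nat \<Rightarrow> nat \<Rightarrow> nat set \<Rightarrow> (nat \<Rightarrow> nat \<Rightarrow> nat) \<Rightarrow> nat \<Rightarrow> nat set" where
  "local_peel d k n v N Rcv 0 = local_remaining d k n v N Rcv"
| "local_peel d k n v N Rcv (Suc i) = {x \<in> local_peel d k n v N Rcv i.
     d < real (card {y \<in> local_peel d k n v N Rcv i. (x, y) \<in> learned_edges d k n v N Rcv})}"

definition local_member :: "real \<Rightarrow> nat \<Rightarrow> nat \<Rightarrow> nat \<Rightarrow> nat set \<Rightarrow> (nat \<Rightarrow> nat \<Rightarrow> nat) \<Rightarrow> nat \<Rightarrow> bool" where
  "local_member d k n v N Rcv j =
     (if j \<le> k then local_alive d N Rcv j else v \<in> local_peel d k n v N Rcv (j - k))"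

definition local_msg ::
  "real \<Rightarrow> nat \<Rightarrow> nat \<Rightarrow> nat \<Rightarrow> nat set \<Rightarrow> nat \<Rightarrow> (nat \<Rightarrow> nat \<Rightarrow> nat) \<Rightarrow> nat \<Rightarrow> nat" where
  "local_msg d k n v N t Rcv p =
     (if t \<le> k then (if local_alive d N Rcv t then 1 else 0)
      else if t = Suc k then local_degree d k n v N Rcv v
      else if t = Suc (Suc k) then local_slot_msg d k n v N Rcv p
      else if t = Suc (Suc (Suc k)) then local_relay d k n v N Rcv
      else 0)"

definition local_out ::
  "real \<Rightarrow> nat \<Rightarrow> nat \<Rightarrow> nat \<Rightarrow> nat set \<Rightarrow> nat \<Rightarrow> (nat \<Rightarrow> nat \<Rightarrow> nat) \<Rightarrow> nat option" where
  "local_out d k n v N t Rcv =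
     (if Suc (Suc (Suc (Suc k))) \<le> t
      then Some (Suc (LEAST i. \<not> local_member d k n v N Rcv (Suc i))) else None)"

text \<open>The induction hypothesis of the simulation: all messages received before round t were
  the intended ones.\<close>
locale intended_history =
  fixes n :: nat and E :: "nat set set" and d :: real and k :: nat and v :: nat
    and Rcv :: "nat \<Rightarrow> nat \<Rightarrow> nat" and t :: nat
  assumes graph: "simple_graph n E" and v: "v < n"
    and few_remaining: "(\<Sum>w<n. peel_degree n E d k w) \<le> n"
    and received: "\<And>j w. j < t \<Longrightarrow> w < n \<Longrightarrow> w \<noteq> v \<Longrightarrow> Rcv j w = intended_msg n E d k j w v"
begin

abbreviation "N \<equiv> neighbours n E v"

lemma not_mem_neighbours: "v \<notin> N"
proof
  assume "v \<in> N"
  then obtain x y where "{v} = {x, y}" "x \<noteq> y" using graph unfolding neighbours_def simple_graph_def by force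
  then show False by (metis doubleton_eq_iff insert_absorb2)
qed

lemma received_bit:
  assumes "j < t" "j \<le> k" "u < n" "u \<noteq> v"
  shows "Rcv j u = 1 \<longleftrightarrow> u \<in> peel n E d j"
  using received[OF assms(1,3,4)] assms(2) unfolding intended_msg_def by simp

lemma local_alive_eq: "i \<le> k \<Longrightarrow> i \<le> t \<Longrightarrow> local_alive d N Rcv i \<longleftrightarrow> v \<in> peel n E d i"
proof (induction i)
  case (Suc i)
  have "Rcv i u = 1 \<longleftrightarrow> u \<in> peel n E d i" if "u \<in> N" for u
  proof -
    have "u < n" "u \<noteq> v" using that not_mem_neighbours unfolding neighbours_def by auto
    then show ?thesis using received_bit[of i u] Suc.prems by simp
  qed
  then have "{u \<in> N. Rcv i u = 1} = N \<inter> peel n E d i" by blast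
  then show ?case using Suc by simp
qed (use v in simp)

lemma local_remaining_eq: "k < t \<Longrightarrow> local_remaining d k n v N Rcv = peel n E d k"
  using local_alive_eq[of k] received_bit[of k] peel_subset[of n E d k] v
  unfolding local_remaining_def by auto

lemma local_degree_eq:
  assumes "w < n" "k < t" "w \<noteq> v \<Longrightarrow> Suc k < t"
  shows "local_degree d k n v N Rcv w = peel_degree n E d k w"
proof (cases "w = v")
  case True
  then show ?thesis using local_alive_eq[of k] local_remaining_eq assms(2)
    unfolding local_degree_def peel_degree_def by (simp add: Int_commute)
next
  case False
  then show ?thesis using received[of "Suc k" w] assms unfolding local_degree_def intended_msg_def by simp
qed

lemma local_slot_msg_eq:
  assumes "Suc k < t"
  shows "local_slot_msg d k n v N Rcv p = slot_msg n E d k v p"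
proof -
  have "local_offset d k n v N Rcv = slot_offset n E d k v"
    unfolding local_offset_def slot_offset_def using local_degree_eq v assms by (intro sum.cong) auto
  then show ?thesis
    using local_alive_eq[of k] local_remaining_eq local_degree_eq[OF v] assms
    unfolding local_slot_msg_def slot_msg_def by (simp add: Int_commute)
qed

lemma local_relay_eq:
  assumes "Suc (Suc k) < t"
  shows "local_relay d k n v N Rcv = relay_code n (\<lambda>x. slot_msg n E d k x v)"
  unfolding local_relay_def using local_slot_msg_eq received[of "Suc (Suc k)"] assms
  by (intro relay_code_cong) (simp add: intended_msg_def)

lemma relayed_code_eq:
  assumes "Suc (Suc (Suc k)) < t" "p < n"
  shows "relayed_code d k n v N Rcv p = relay_code n (\<lambda>x. slot_msg n E d k x p)"
  using local_relay_eq received[of "Suc (Suc (Suc k))" p] assms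
  unfolding relayed_code_def intended_msg_def by auto

lemma learned_edges_eq:
  assumes "Suc (Suc (Suc k)) < t"
  shows "learned_edges d k n v N Rcv
    = {(x, y). x \<in> peel n E d k \<and> y \<in> neighbours n E x \<inter> peel n E d k}"
proof -
  have "{c. \<exists>p<n. c = relayed_code d k n v N Rcv p \<and> c \<noteq> 0}
      = {c. \<exists>p<n. c = relay_code n (\<lambda>x. slot_msg n E d k x p) \<and> c \<noteq> 0}"
    using relayed_code_eq[OF assms] by auto
  then show ?thesis
    unfolding learned_edges_def by (simp only: decode_relay_codes_eq_remaining_edges[OF few_remaining])
qed

lemma local_peel_eq:
  assumes "Suc (Suc (Suc k)) < t"
  shows "local_peel d k n v N Rcv i = peel n E d (k + i)"
proof (induction i)
  case (Suc i)
  have "{y \<in> peel n E d (k + i). (x, y) \<in> learned_edges d k n v N Rcv}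
      = neighbours n E x \<inter> peel n E d (k + i)" if "x \<in> peel n E d (k + i)" for x
    using that peel_antimono[of k "k + i" n E d] learned_edges_eq[OF assms]
    by (auto simp del: peel.simps)
  then show ?case using Suc.IH by auto
qed (use local_remaining_eq assms in simp)

lemma local_member_eq:
  "Suc (Suc (Suc k)) < t \<Longrightarrow> local_member d k n v N Rcv j \<longleftrightarrow> v \<in> peel n E d j"
  using local_alive_eq[of j] local_peel_eq[of "j - k"] unfolding local_member_def by auto

lemma local_msg_eq: "local_msg d k n v N t Rcv p = intended_msg n E d k t v p"
  using local_alive_eq[of t] local_degree_eq[OF v] local_slot_msg_eq local_relay_eq
  unfolding local_msg_def intended_msg_def by (auto simp del: peel.simps)

lemma local_out_eq:
  "local_out d k n v N t Rcv =
     (if Suc (Suc (Suc (Suc k))) \<le> t then Some (peel_level n E d v) else None)"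
  using local_member_eq unfolding local_out_def peel_level_def by simp

end

section \<open>The algorithm\<close>

definition received_msgs :: "cc_alg \<Rightarrow> nat \<Rightarrow> nat \<Rightarrow> nat set set \<Rightarrow> nat \<Rightarrow> nat \<Rightarrow> nat \<Rightarrow> nat" where
  "received_msgs Alg n a E v j w =
     (if w < n \<and> w \<noteq> v then cc_msg Alg (cc_run Alg n a E j w) v else 0)"

definition encode_state :: "nat \<Rightarrow> nat \<Rightarrow> nat \<Rightarrow> nat set \<Rightarrow> nat \<Rightarrow> (nat \<Rightarrow> nat \<Rightarrow> nat) \<Rightarrow> nat list" where
  "encode_state n a v N t R = [n, a, v, t] @ map (\<lambda>u. if u \<in> N then 1 else 0) [0..<n]
     @ concat (map (\<lambda>j. map (R j) [0..<n]) [0..<t])"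

definition state_neighbours :: "nat list \<Rightarrow> nat set" where
  "state_neighbours s = {u. u < s ! 0 \<and> s ! (4 + u) = 1}"

definition state_received :: "nat list \<Rightarrow> nat \<Rightarrow> nat \<Rightarrow> nat" where
  "state_received s j w = (if j < s ! 3 \<and> w < s ! 0 then s ! (4 + s ! 0 + j * s ! 0 + w) else 0)"

text \<open>Messages are cut off at n^3, so that they have O(log n) bits; on the intended messages this
  is the identity.\<close>
definition peel_alg :: "real \<Rightarrow> cc_alg" where
  "peel_alg eps = CCAlg (\<lambda>n a v N. encode_state n a v N 0 (\<lambda>_ _. 0))
     (\<lambda>s u. let m = local_msg ((2 + eps) * real (s ! 1)) (peel_rounds eps (s ! 1)) (s ! 0) (s ! 2)
                      (state_neighbours s) (s ! 3) (state_received s) u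
            in if m < s ! 0 ^ 3 then m else 0)
     (\<lambda>s r. s[3 := Suc (s ! 3)] @ map r [0..<s ! 0])
     (\<lambda>s. local_out ((2 + eps) * real (s ! 1)) (peel_rounds eps (s ! 1)) (s ! 0) (s ! 2)
            (state_neighbours s) (s ! 3) (state_received s))"

lemma nth_concat_map_upt:
  assumes "\<And>j. length (f j) = n" "j < t" "w < n"
  shows "concat (map f [0..<t]) ! (j * n + w) = f j ! w"
  using assms(2)
proof (induction t)
  case (Suc t)
  have len: "length (concat (map f [0..<t])) = t * n"
    using assms(1) by (induction t) auto
  show ?case
  proof (cases "j < t")
    case True
    have "j * n + w < Suc j * n" using assms(3) by simp
    also have "\<dots> \<le> t * n" using True by (intro mult_right_mono) auto
    finally show ?thesis using Suc True len by (simp add: nth_append)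
  next
    case False
    then have "j = t" using Suc.prems by simp
    then show ?thesis using len by (simp add: nth_append)
  qed
qed simp

lemma encode_state_Suc:
  "encode_state n a v N (Suc t) R = (encode_state n a v N t R)[3 := Suc t] @ map (R t) [0..<n]"
  unfolding encode_state_def by simp

lemma encode_state_header:
  "encode_state n a v N t R ! 0 = n" "encode_state n a v N t R ! Suc 0 = a"
  "encode_state n a v N t R ! 2 = v" "encode_state n a v N t R ! 3 = t"
  unfolding encode_state_def by simp_all

lemma state_neighbours_encode: "state_neighbours (encode_state n a v N t R) = {u. u < n \<and> u \<in> N}"
  unfolding state_neighbours_def encode_state_header by (auto simp: encode_state_def nth_append)

lemma state_received_encode:
  "state_received (encode_state n a v N t R) j w = (if j < t \<and> w < n then R j w else 0)"
proof (cases "j < t \<and> w < n")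
  case True
  have "encode_state n a v N t R ! (4 + n + j * n + w) =
        concat (map (\<lambda>j. map (R j) [0..<n]) [0..<t]) ! (j * n + w)"
    unfolding encode_state_def by (simp add: nth_append add.assoc)
  also have "\<dots> = R j w" using nth_concat_map_upt[of "\<lambda>j. map (R j) [0..<n]" n j t w] True by simp
  finally show ?thesis unfolding state_received_def encode_state_header using True by simp
qed (auto simp: state_received_def encode_state_header)

lemma cc_run_peel_alg:
  "cc_run (peel_alg eps) n a E t v =
     encode_state n a v {u. {u, v} \<in> E} t (received_msgs (peel_alg eps) n a E v)"
proof (induction t)
  case (Suc t)
  show ?case
    unfolding cc_run.simps Suc received_msgs_def
    by (simp add: peel_alg_def encode_state_Suc encode_state_header del: cc_run.simps)
qed (simp add: peel_alg_def encode_state_def)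

lemma state_peel_alg:
  fixes eps :: real and n a t v :: nat and E :: "nat set set"
  defines "s \<equiv> cc_run (peel_alg eps) n a E t v"
  shows "s ! 0 = n" "s ! 1 = a" "s ! 2 = v" "s ! 3 = t"
    "state_neighbours s = neighbours n E v"
    "state_received s = (\<lambda>j w. if j < t then received_msgs (peel_alg eps) n a E v j w else 0)"
  unfolding s_def cc_run_peel_alg
  by (auto simp: encode_state_header state_neighbours_encode state_received_encode neighbours_def
      received_msgs_def fun_eq_iff simp del: cc_run.simps)

lemma cc_msg_peel_alg:
  "cc_msg (peel_alg eps) (cc_run (peel_alg eps) n a E t v) u =
    (let m = local_msg ((2 + eps) * real a) (peel_rounds eps a) n v (neighbours n E v) t
               (\<lambda>j w. if j < t then received_msgs (peel_alg eps) n a E v j w else 0) u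
     in if m < n ^ 3 then m else 0)"
  using state_peel_alg[of eps n a E t v] by (simp add: peel_alg_def del: cc_run.simps)

lemma cc_out_peel_alg:
  "cc_out (peel_alg eps) (cc_run (peel_alg eps) n a E t v) =
    local_out ((2 + eps) * real a) (peel_rounds eps a) n v (neighbours n E v) t
      (\<lambda>j w. if j < t then received_msgs (peel_alg eps) n a E v j w else 0)"
  using state_peel_alg[of eps n a E t v] by (simp add: peel_alg_def del: cc_run.simps)

lemma cc_msg_peel_alg_less: "0 < n \<Longrightarrow> cc_msg (peel_alg eps) (cc_run (peel_alg eps) n a E t v) u < n ^ 3"
  unfolding cc_msg_peel_alg Let_def by simp

lemma cc_msg_peel_alg_eq_intended:
  assumes graph: "simple_graph n E" and "2 \<le> n"
    and few: "(\<Sum>w<n. peel_degree n E ((2 + eps) * real a) (peel_rounds eps a) w) \<le> n"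
    and "w < n" "u < n" "u \<noteq> w"
  shows "cc_msg (peel_alg eps) (cc_run (peel_alg eps) n a E j w) u
    = intended_msg n E ((2 + eps) * real a) (peel_rounds eps a) j w u"
  using assms(4-6)
proof (induction j arbitrary: w u rule: less_induct)
  case (less j)
  interpret intended_history n E "(2 + eps) * real a" "peel_rounds eps a" w
    "\<lambda>j' w'. if j' < j then received_msgs (peel_alg eps) n a E w j' w' else 0" j
    using graph few less by unfold_locales (simp_all add: received_msgs_def)
  show ?case
    using local_msg_eq intended_msg_less[OF \<open>2 \<le> n\<close>] by (simp add: cc_msg_peel_alg)
qed

lemma cc_out_peel_alg_eq_peel_level:
  fixes eps :: real
  assumes graph: "simple_graph n E" and arb: "arboricity E = a" and "0 < a" "0 < eps" "v < n"
  shows "cc_out (peel_alg eps) (cc_run (peel_alg eps) n a E t v) =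
    (if peel_rounds eps a + 4 \<le> t then Some (peel_level n E ((2 + eps) * real a) v) else None)"
proof -
  have "2 \<le> n" using arboricity_pos_imp_two_le graph arb \<open>0 < a\<close> by blast
  have few: "(\<Sum>w<n. peel_degree n E ((2 + eps) * real a) (peel_rounds eps a) w) \<le> n"
    using sum_peel_degree_le[OF graph] card_peel_rounds_le[OF graph] arb assms(3,4) by (metis le_trans)
  interpret intended_history n E "(2 + eps) * real a" "peel_rounds eps a" v
    "\<lambda>j w. if j < t then received_msgs (peel_alg eps) n a E v j w else 0" t
    using graph few \<open>v < n\<close> cc_msg_peel_alg_eq_intended[OF graph \<open>2 \<le> n\<close> few]
    by unfold_locales (simp_all add: received_msgs_def)
  show ?thesis using local_out_eq by (simp add: cc_out_peel_alg)
qed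

lemma is_H_partition_cong:
  assumes "\<And>v. v < n \<Longrightarrow> h v = h' v"
  shows "is_H_partition n E A l h \<longleftrightarrow> is_H_partition n E A l h'"
proof -
  have "{u. u < n \<and> {u, v} \<in> E \<and> h u \<ge> h v} = {u. u < n \<and> {u, v} \<in> E \<and> h' u \<ge> h' v}"
    if "v < n" for v
    using assms that by auto
  then show ?thesis unfolding is_H_partition_def using assms by auto
qed

lemma nat_ceiling_log_le_log2:
  fixes b x c :: real
  assumes "1 < b" "2 \<le> x" "0 \<le> c"
  shows "real (nat \<lceil>log b x\<rceil>) + c \<le> (1 / log 2 b + c + 1) * log 2 x"
proof -
  have "0 \<le> log b x" using assms by simp
  then have "real (nat \<lceil>log b x\<rceil>) + c \<le> log b x + (c + 1)" by linarith
  also have "\<dots> = log 2 x / log 2 b + (c + 1) * 1" by (simp add: log_base_change)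
  also have "\<dots> \<le> log 2 x / log 2 b + (c + 1) * log 2 x"
    using assms by (intro add_left_mono mult_left_mono) auto
  also have "\<dots> = (1 / log 2 b + c + 1) * log 2 x" by (simp add: algebra_simps)
  finally show ?thesis .
qed

definition peel_const :: "real \<Rightarrow> real" where
  "peel_const eps = 2 * (1 / log 2 ((2 + eps) / 2) + 5)"

lemma peel_rounds_le_log:
  fixes eps :: real
  assumes "0 < eps" "2 \<le> a"
  shows "real (peel_rounds eps a + 4) \<le> peel_const eps * log 2 a"
proof -
  let ?K = "1 / log 2 ((2 + eps) / 2) + 4 + 1"
  have "0 \<le> ?K" using assms(1) by simp
  have "real (peel_rounds eps a + 4) \<le> ?K * log 2 (2 * real a)"
    using nat_ceiling_log_le_log2[of "(2 + eps) / 2" "2 * real a" 4] assms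
    unfolding peel_rounds_def by simp
  also have "\<dots> = ?K * (1 + log 2 a)" using assms(2) by (simp add: log_mult)
  also have "\<dots> \<le> ?K * (2 * log 2 a)" using \<open>0 \<le> ?K\<close> assms(2) by (intro mult_left_mono) auto
  finally show ?thesis unfolding peel_const_def by (simp add: algebra_simps)
qed

lemma peel_levels_le_log:
  fixes eps :: real and n :: nat
  assumes "0 < eps" "2 \<le> n"
  shows "real (nat \<lceil>log ((2 + eps) / 2) n\<rceil> + 1) \<le> peel_const eps * log 2 n"
proof -
  define L where "L = 1 / log 2 ((2 + eps) / 2)"
  have "0 < L" using assms(1) unfolding L_def by simp
  have "real (nat \<lceil>log ((2 + eps) / 2) n\<rceil> + 1) \<le> (L + 1 + 1) * log 2 n"
    using nat_ceiling_log_le_log2[of "(2 + eps) / 2" n 1] assms unfolding L_def by simp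
  also have "\<dots> \<le> 2 * (L + 5) * log 2 n"
    using \<open>0 < L\<close> assms(2) by (intro mult_right_mono) auto
  finally show ?thesis unfolding peel_const_def L_def .
qed

lemma peel_alg_correct:
  fixes eps :: real
  assumes eps: "0 < eps" and graph: "simple_graph n E" and arb: "arboricity E = a" and "2 \<le> a"
  shows "\<forall>t u v. u < n \<and> v < n \<and> u \<noteq> v \<longrightarrow>
      cc_msg (peel_alg eps) (cc_run (peel_alg eps) n a E t u) v < n ^ 3"
    and "\<forall>t t' v i. v < n \<and> t \<le> t' \<and> cc_out (peel_alg eps) (cc_run (peel_alg eps) n a E t v) = Some i
      \<longrightarrow> cc_out (peel_alg eps) (cc_run (peel_alg eps) n a E t' v) = Some i"
    and "\<exists>T. real T \<le> peel_const eps * log 2 a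
      \<and> (\<forall>v<n. cc_out (peel_alg eps) (cc_run (peel_alg eps) n a E T v) \<noteq> None)
      \<and> (\<exists>l. real l \<le> peel_const eps * log 2 n \<and> is_H_partition n E ((2 + eps) * real a) l
            (\<lambda>v. the (cc_out (peel_alg eps) (cc_run (peel_alg eps) n a E T v))))"
proof -
  have "0 < a" using \<open>2 \<le> a\<close> by simp
  note out = cc_out_peel_alg_eq_peel_level[OF graph arb this eps]
  show "\<forall>t u v. u < n \<and> v < n \<and> u \<noteq> v \<longrightarrow>
      cc_msg (peel_alg eps) (cc_run (peel_alg eps) n a E t u) v < n ^ 3"
    using cc_msg_peel_alg_less by simp
  show "\<forall>t t' v i. v < n \<and> t \<le> t' \<and> cc_out (peel_alg eps) (cc_run (peel_alg eps) n a E t v) = Some i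
      \<longrightarrow> cc_out (peel_alg eps) (cc_run (peel_alg eps) n a E t' v) = Some i"
    using out by (auto split: if_splits simp del: cc_run.simps)
  let ?T = "peel_rounds eps a + 4" and ?l = "nat \<lceil>log ((2 + eps) / 2) n\<rceil> + 1"
  have decided: "\<forall>v<n. cc_out (peel_alg eps) (cc_run (peel_alg eps) n a E ?T v) \<noteq> None"
    using out by (simp del: cc_run.simps)
  have "is_H_partition n E ((2 + eps) * real a) ?l (peel_level n E ((2 + eps) * real a))"
    using peel_eventually_empty[OF graph _ eps] arb \<open>0 < a\<close> by (intro peel_level_is_H_partition) simp
  then have "is_H_partition n E ((2 + eps) * real a) ?l
      (\<lambda>v. the (cc_out (peel_alg eps) (cc_run (peel_alg eps) n a E ?T v)))"
    using out by (subst is_H_partition_cong) (simp_all del: cc_run.simps)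
  moreover have "2 \<le> n" using arboricity_pos_imp_two_le graph arb \<open>0 < a\<close> by blast
  ultimately show "\<exists>T. real T \<le> peel_const eps * log 2 a
      \<and> (\<forall>v<n. cc_out (peel_alg eps) (cc_run (peel_alg eps) n a E T v) \<noteq> None)
      \<and> (\<exists>l. real l \<le> peel_const eps * log 2 n \<and> is_H_partition n E ((2 + eps) * real a) l
            (\<lambda>v. the (cc_out (peel_alg eps) (cc_run (peel_alg eps) n a E T v))))"
    using decided peel_rounds_le_log[OF eps \<open>2 \<le> a\<close>] peel_levels_le_log[OF eps \<open>2 \<le> n\<close>]
    by (intro exI[of _ ?T] exI[of _ ?l] conjI) blast+
qed

theorem theorem1:
  shows "\<forall>\<epsilon>::real. 0 < \<epsilon> \<and> \<epsilon> \<le> 2 \<longrightarrow>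
    (\<exists>(Alg :: cc_alg) (C :: real) (B :: nat).
      \<forall>(n :: nat) (E :: nat set set) (a :: nat).
        simple_graph n E \<and> arboricity E = a \<and> a \<ge> 2 \<longrightarrow>
          \<comment> \<open>messages have O(log n) bits\<close>
          (\<forall>t u v. u < n \<and> v < n \<and> u \<noteq> v \<longrightarrow> cc_msg Alg (cc_run Alg n a E t u) v < n ^ B) \<and>
          \<comment> \<open>outputs, once produced, are final\<close>
          (\<forall>t t' v i. v < n \<and> t \<le> t' \<and> cc_out Alg (cc_run Alg n a E t v) = Some i \<longrightarrow>
              cc_out Alg (cc_run Alg n a E t' v) = Some i) \<and>
          \<comment> \<open>after T = O(log a) rounds every vertex knows its index in an H-partition\<close>
          (\<exists>T :: nat. real T \<le> C * log 2 (real a) \<and>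
             (\<forall>v<n. cc_out Alg (cc_run Alg n a E T v) \<noteq> None) \<and>
             (\<exists>l :: nat. real l \<le> C * log 2 (real n) \<and>
                is_H_partition n E ((2 + \<epsilon>) * real a) l
                  (\<lambda>v. the (cc_out Alg (cc_run Alg n a E T v))))))"
proof (intro allI impI)
  fix eps :: real
  assume "0 < eps \<and> eps \<le> 2"
  then have "0 < eps" by simp
  note correct = peel_alg_correct[OF this]
  show "\<exists>Alg C B. \<forall>n E a. simple_graph n E \<and> arboricity E = a \<and> 2 \<le> a \<longrightarrow>
    (\<forall>t u v. u < n \<and> v < n \<and> u \<noteq> v \<longrightarrow> cc_msg Alg (cc_run Alg n a E t u) v < n ^ B) \<and>
    (\<forall>t t' v i. v < n \<and> t \<le> t' \<and> cc_out Alg (cc_run Alg n a E t v) = Some i \<longrightarrow>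
      cc_out Alg (cc_run Alg n a E t' v) = Some i) \<and>
    (\<exists>T. real T \<le> C * log 2 (real a) \<and> (\<forall>v<n. cc_out Alg (cc_run Alg n a E T v) \<noteq> None) \<and>
      (\<exists>l. real l \<le> C * log 2 (real n) \<and>
        is_H_partition n E ((2 + eps) * real a) l (\<lambda>v. the (cc_out Alg (cc_run Alg n a E T v)))))"
    using correct
    by (intro exI[of _ "peel_alg eps"] exI[of _ "peel_const eps"] exI[of _ 3] allI impI, elim conjE)
      (intro conjI; assumption)
qed

end
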